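(* Let $G$ be a finite non-abelian group such that $G/Z(G)\cong C_2\times C_2\times C_2$. Then the non-centralizer graph $\Upsilon_G$ is regular if and only if $[G:C_G(x)]=4$ for all $x\in G\setminus Z(G)$.
   Context: For a finite group $G$, $C_G(x)$ denotes the centralizer of $x\in G$ and $Z(G)$ the center. The non-centralizer graph $\Upsilon_G$ is the simple graph with vertex set $G$ in which two distinct vertices $x,y$ are adjacent if and only if $C_G(x)\neq C_G(y)$. A graph is regular if all its vertices have the same degree. *)

theory Defs
  imports "HOL-Algebra.Algebra"
begin

definition centralizer :: "('a, 'b) monoid_scheme \<Rightarrow> 'a \<Rightarrow> 'a set" where
  "centralizer G x = {y \<in> carrier G. x \<otimes>\<^bsub>G\<^esub> y = y \<otimes>\<^bsub>G\<^esub> x}"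

definition center :: "('a, 'b) monoid_scheme \<Rightarrow> 'a set" where
  "center G = {z \<in> carrier G. \<forall>y \<in> carrier G. z \<otimes>\<^bsub>G\<^esub> y = y \<otimes>\<^bsub>G\<^esub> z}"

definition noncent_adj :: "('a, 'b) monoid_scheme \<Rightarrow> 'a \<Rightarrow> 'a \<Rightarrow> bool" where
  "noncent_adj G x y \<longleftrightarrow> x \<noteq> y \<and> centralizer G x \<noteq> centralizer G y"

definition noncent_degree :: "('a, 'b) monoid_scheme \<Rightarrow> 'a \<Rightarrow> nat" where
  "noncent_degree G x = card {y \<in> carrier G. noncent_adj G x y}"

definition noncent_regular :: "('a, 'b) monoid_scheme \<Rightarrow> bool" where
  "noncent_regular G \<longleftrightarrow>
     (\<forall>x \<in> carrier G. \<forall>y \<in> carrier G. noncent_degree G x = noncent_degree G y)"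

definition group_index :: "('a, 'b) monoid_scheme \<Rightarrow> 'a set \<Rightarrow> nat" where
  "group_index G H = card (rcosets\<^bsub>G\<^esub> H)"

end

theory Submission
  imports Defs
begin

text \<open>Call x and y equivalent when their centralizers coincide. The degree of x in the
  non-centralizer graph is |G| minus the size of its class, and the class of a central element
  is Z = Z(G), so the graph is regular iff every class has exactly |Z| elements. If |G/Z| = 8
  and x is not central, C(x) contains the disjoint cosets Z and Zx, so |C(x)| is 2|Z| or 4|Z|.
  In the first case C(x) is the union of Z and Zx, and the class of x is Zx. In the second,
  take y in C(x) outside Z and Zx: the subgroup C(x) \<inter> C(y) contains the three cosets Z, Zx
  and Zy, so its order divides 4|Z| and is at least 3|Z|, whence C(x) \<subseteq> C(y). As C(y) is a
  proper subgroup, |C(y)| \<le> 4|Z| forces C(y) = C(x), and the class of x contains Zx and y.\<close>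

definition centralizer_class :: "('a, 'b) monoid_scheme \<Rightarrow> 'a \<Rightarrow> 'a set" where
  "centralizer_class G x = {y \<in> carrier G. centralizer G y = centralizer G x}"

context group
begin

lemma commute_inv:
  assumes "a \<in> carrier G" "x \<in> carrier G" "a \<otimes> x = x \<otimes> a"
  shows "inv a \<otimes> x = x \<otimes> inv a"
  using assms by (metis inv_closed inv_solve_left m_assoc m_closed r_inv r_one)

lemma commute_mult:
  assumes "a \<in> carrier G" "b \<in> carrier G" "x \<in> carrier G"
    and "a \<otimes> x = x \<otimes> a" "b \<otimes> x = x \<otimes> b"
  shows "a \<otimes> b \<otimes> x = x \<otimes> (a \<otimes> b)"
  using assms by (metis m_assoc)

lemma subgroup_centralizer:
  assumes "x \<in> carrier G"
  shows "subgroup (centralizer G x) G"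
proof (rule subgroupI)
  show "centralizer G x \<subseteq> carrier G" "centralizer G x \<noteq> {}"
    using assms by (auto simp: centralizer_def)
  show "inv a \<in> centralizer G x" if "a \<in> centralizer G x" for a
    using that assms commute_inv[of a x] by (auto simp: centralizer_def)
  show "a \<otimes> b \<in> centralizer G x" if "a \<in> centralizer G x" "b \<in> centralizer G x" for a b
    using that assms commute_mult[of a b x] by (auto simp: centralizer_def)
qed

lemma center_eq_Inter_centralizer: "center G = (\<Inter>x \<in> carrier G. centralizer G x)"
  by (auto simp: center_def centralizer_def)

lemma subgroup_center: "subgroup (center G) G"
  unfolding center_eq_Inter_centralizer
  by (rule subgroups_Inter) (auto simp: subgroup_centralizer)

lemma center_subset_centralizer: "x \<in> carrier G \<Longrightarrow> center G \<subseteq> centralizer G x"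
  by (auto simp: center_def centralizer_def)

lemma centralizer_self: "x \<in> carrier G \<Longrightarrow> x \<in> centralizer G x"
  by (simp add: centralizer_def)

lemma centralizer_eq_carrier_iff:
  "x \<in> carrier G \<Longrightarrow> centralizer G x = carrier G \<longleftrightarrow> x \<in> center G"
  by (auto simp: center_def centralizer_def)

lemma center_subset_carrier: "center G \<subseteq> carrier G"
  by (auto simp: center_def)

lemma centralizer_mult_center:
  assumes "z \<in> center G" "x \<in> carrier G"
  shows "centralizer G (z \<otimes> x) = centralizer G x"
proof -
  have z: "z \<in> carrier G" "\<And>y. y \<in> carrier G \<Longrightarrow> y \<otimes> z = z \<otimes> y"
    using assms(1) by (auto simp: center_def)
  have "z \<otimes> x \<otimes> y = y \<otimes> (z \<otimes> x) \<longleftrightarrow> x \<otimes> y = y \<otimes> x" if y: "y \<in> carrier G" for y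
  proof -
    have "y \<otimes> (z \<otimes> x) = z \<otimes> (y \<otimes> x)"
      using y assms(2) z by (simp flip: m_assoc)
    then show ?thesis
      using y assms(2) z by (simp add: m_assoc)
  qed
  then show ?thesis by (auto simp: centralizer_def)
qed

lemma finite_centralizer: "finite (carrier G) \<Longrightarrow> finite (centralizer G x)"
  by (simp add: centralizer_def)

lemma finite_centralizer_class: "finite (carrier G) \<Longrightarrow> finite (centralizer_class G x)"
  by (simp add: centralizer_class_def)

lemma finite_rcos_center:
  "finite (carrier G) \<Longrightarrow> x \<in> carrier G \<Longrightarrow> finite (center G #> x)"
  using center_subset_carrier r_coset_subset_G finite_subset by metis

lemma card_center_pos: "finite (carrier G) \<Longrightarrow> 0 < card (center G)"
  using center_subset_carrier subgroup.one_closed[OF subgroup_center]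
  by (metis card_gt_0_iff empty_iff finite_subset)

lemma centralizer_class_center:
  assumes "z \<in> center G"
  shows "centralizer_class G z = center G"
proof -
  have "centralizer G z = carrier G"
    using assms center_subset_carrier centralizer_eq_carrier_iff by blast
  then show ?thesis
    using center_subset_carrier centralizer_eq_carrier_iff
    by (auto simp: centralizer_class_def)
qed

lemma rcos_center_subset_centralizer_class:
  "x \<in> carrier G \<Longrightarrow> center G #> x \<subseteq> centralizer_class G x"
  using center_subset_carrier
  by (auto simp: r_coset_def centralizer_class_def centralizer_mult_center)

lemma centralizer_class_subset:
  assumes "x \<in> carrier G - center G"
  shows "centralizer_class G x \<subseteq> centralizer G x - center G"
proof
  fix y assume "y \<in> centralizer_class G x"
  then have y: "y \<in> carrier G" "centralizer G y = centralizer G x"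
    by (auto simp: centralizer_class_def)
  then have "y \<in> centralizer G x" using centralizer_self by blast
  moreover have "y \<notin> center G"
    using y assms centralizer_eq_carrier_iff by (metis DiffE)
  ultimately show "y \<in> centralizer G x - center G" by blast
qed

lemma noncent_degree_eq:
  assumes "finite (carrier G)" "x \<in> carrier G"
  shows "noncent_degree G x = order G - card (centralizer_class G x)"
proof -
  have "{y \<in> carrier G. noncent_adj G x y} = carrier G - centralizer_class G x"
    by (auto simp: noncent_adj_def centralizer_class_def)
  moreover have "centralizer_class G x \<subseteq> carrier G"
    by (auto simp: centralizer_class_def)
  ultimately show ?thesis
    using assms(1) by (simp add: noncent_degree_def order_def card_Diff_subset finite_subset)
qed

lemma noncent_regular_iff_card_centralizer_class:
  assumes "finite (carrier G)"
  shows "noncent_regular G \<longleftrightarrow> (\<forall>x \<in> carrier G. card (centralizer_class G x) = card (center G))"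
proof -
  have le: "card (centralizer_class G x) \<le> order G" for x
    unfolding order_def centralizer_class_def using assms by (auto intro: card_mono)
  have "noncent_degree G x = noncent_degree G \<one> \<longleftrightarrow>
      card (centralizer_class G x) = card (center G)" if "x \<in> carrier G" for x
    using le[of x] le[of \<one>] that assms subgroup.one_closed[OF subgroup_center]
    by (auto simp: noncent_degree_eq centralizer_class_center)
  then show ?thesis
    unfolding noncent_regular_def by (metis one_closed)
qed

lemma card_subgroup_dvd:
  assumes "subgroup K G" "subgroup H G" "K \<subseteq> H"
  shows "card K dvd card H"
proof -
  interpret H: group "G\<lparr>carrier := H\<rparr>"
    using assms(2) by (rule subgroup_imp_group)
  have "card (rcosets\<^bsub>G\<lparr>carrier := H\<rparr>\<^esub> K) * card K = card H"
    using H.lagrange[OF subgroup_incl[OF assms]] by (simp add: order_def)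
  then show ?thesis by (metis dvd_triv_right)
qed

lemma card_rcos: "H \<subseteq> carrier G \<Longrightarrow> x \<in> carrier G \<Longrightarrow> card (H #> x) = card H"
  by (metis card_rcosets_equal rcosetsI)

lemma rcos_subset_subgroup: "subgroup H G \<Longrightarrow> K \<subseteq> H \<Longrightarrow> x \<in> H \<Longrightarrow> K #> x \<subseteq> H"
  by (auto simp: r_coset_def subgroup.m_closed)

lemma rcos_disjoint_notin:
  assumes "subgroup H G" "x \<in> carrier G" "y \<in> carrier G" "y \<notin> H #> x"
  shows "(H #> x) \<inter> (H #> y) = {}"
proof -
  have "H #> x \<noteq> H #> y" using assms rcos_self by blast
  moreover have "H #> x \<in> rcosets H" "H #> y \<in> rcosets H"
    using assms subgroup.subset by (auto intro: rcosetsI)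
  ultimately show ?thesis
    using rcos_disjoint[OF assms(1)] by (auto simp: pairwise_def disjnt_def)
qed

lemma card_center_Un_rcos:
  assumes "finite (carrier G)" "x \<in> carrier G - center G"
  shows "card (center G \<union> (center G #> x)) = 2 * card (center G)"
proof -
  have "center G \<inter> (center G #> x) = {}"
    using rcos_disjoint_notin[OF subgroup_center, of \<one> x] assms center_subset_carrier
    by simp
  moreover have "finite (center G)" "finite (center G #> x)"
    using assms center_subset_carrier finite_subset finite_rcos_center by auto
  ultimately have "card (center G \<union> (center G #> x)) = card (center G) + card (center G #> x)"
    by (simp add: card_Un_disjoint)
  then show ?thesis
    using assms center_subset_carrier card_rcos[of "center G" x] by simp
qed

lemma center_Un_rcos_subset_centralizer:
  "x \<in> carrier G \<Longrightarrow> center G \<union> (center G #> x) \<subseteq> centralizer G x"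
  using rcos_subset_subgroup[OF subgroup_centralizer center_subset_centralizer]
    center_subset_centralizer centralizer_self
  by blast

lemma two_card_center_le_card_centralizer:
  assumes "finite (carrier G)" "x \<in> carrier G - center G"
  shows "2 * card (center G) \<le> card (centralizer G x)"
  using card_mono[OF finite_centralizer center_Un_rcos_subset_centralizer]
    card_center_Un_rcos[OF assms] assms
  by (metis DiffD1)

lemma card_center_Un_two_rcos:
  assumes fin: "finite (carrier G)" and x: "x \<in> carrier G - center G"
    and y: "y \<in> carrier G - (center G \<union> (center G #> x))"
  shows "card (center G \<union> (center G #> x) \<union> (center G #> y)) = 3 * card (center G)"
proof -
  have "(center G \<union> (center G #> x)) \<inter> (center G #> y) = {}"
    using rcos_disjoint_notin[OF subgroup_center, of x y]
      rcos_disjoint_notin[OF subgroup_center, of \<one> y] x y center_subset_carrier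
    by auto
  moreover have "finite (center G)" "finite (center G #> x)" "finite (center G #> y)"
    using fin x y center_subset_carrier finite_subset finite_rcos_center by auto
  ultimately show ?thesis
    using card_center_Un_rcos[OF fin x] card_rcos[OF center_subset_carrier] y
    by (simp add: card_Un_disjoint)
qed

lemma centralizer_subset_centralizer:
  assumes fin: "finite (carrier G)" and x: "x \<in> carrier G - center G"
    and card_x: "card (centralizer G x) = 4 * card (center G)"
    and y: "y \<in> centralizer G x - (center G \<union> (center G #> x))"
  shows "centralizer G x \<subseteq> centralizer G y"
proof -
  let ?Z = "center G" and ?H = "centralizer G x \<inter> centralizer G y"
  have yG: "y \<in> carrier G"
    using y x subgroup.subset[OF subgroup_centralizer] by blast
  have H: "subgroup ?H G"
    using x yG by (blast intro: subgroups_Inter_pair subgroup_centralizer)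
  have ZH: "?Z \<subseteq> ?H"
    using x yG center_subset_centralizer by blast
  have "x \<in> ?H" "y \<in> ?H"
    using x y yG centralizer_self by (auto simp: centralizer_def)
  then have sub: "?Z \<union> (?Z #> x) \<union> (?Z #> y) \<subseteq> ?H"
    using ZH rcos_subset_subgroup[OF H ZH] by blast
  have three: "3 * card ?Z \<le> card ?H"
    using card_mono[OF _ sub] card_center_Un_two_rcos[OF fin x] y yG finite_centralizer[OF fin]
    by (metis DiffD2 DiffI finite_Int)
  obtain j where j: "card ?H = j * card ?Z"
    using card_subgroup_dvd[OF subgroup_center H ZH] by (metis dvdE mult.commute)
  have "card ?H dvd 4 * card ?Z"
    using card_subgroup_dvd[OF H subgroup_centralizer Int_lower1] x card_x by simp
  then have "j dvd 4" "3 \<le> j"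
    using j three card_center_pos[OF fin] by auto
  then have "j = 4"
    using dvd_imp_le[of j 4] by (cases "j = 3") auto
  then have "?H = centralizer G x"
    using card_subset_eq[OF finite_centralizer[OF fin] Int_lower1] j card_x by simp
  then show ?thesis by blast
qed

lemma card_centralizer_cases:
  assumes fin: "finite (carrier G)" and ord: "order G = 8 * card (center G)"
    and x: "x \<in> carrier G - center G"
  shows "card (centralizer G x) = 2 * card (center G) \<or>
    card (centralizer G x) = 4 * card (center G)"
proof -
  have Cx: "subgroup (centralizer G x) G"
    using x subgroup_centralizer by blast
  obtain k where k: "card (centralizer G x) = k * card (center G)"
    using card_subgroup_dvd[OF subgroup_center Cx] center_subset_centralizer x
    by (metis DiffD1 dvdE mult.commute)
  have "card (centralizer G x) dvd order G"
    using card_subgroup_dvd[OF Cx subgroup_self subgroup.subset[OF Cx]] by (simp add: order_def)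
  then have "k dvd 8"
    using k ord card_center_pos[OF fin] by simp
  have "2 \<le> k"
    using two_card_center_le_card_centralizer[OF fin x] k card_center_pos[OF fin] by simp
  have "centralizer G x \<subset> carrier G"
    using x centralizer_eq_carrier_iff subgroup.subset[OF Cx] by blast
  then have "card (centralizer G x) < order G"
    using fin psubset_card_mono by (simp add: order_def)
  then have "k < 8"
    using k ord by simp
  with \<open>2 \<le> k\<close> have "k \<in> {2, 3, 4, 5, 6, 7}" by auto
  with \<open>k dvd 8\<close> show ?thesis
    using k by auto
qed

lemma card_centralizer_class_eq_card_center:
  assumes fin: "finite (carrier G)" and x: "x \<in> carrier G - center G"
    and card_x: "card (centralizer G x) = 2 * card (center G)"
  shows "card (centralizer_class G x) = card (center G)"
proof (rule antisym)
  note fin_Cx = finite_centralizer[OF fin, of x]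
  have "center G \<subseteq> centralizer G x"
    using x center_subset_centralizer by blast
  then have "card (centralizer G x - center G) = card (center G)"
    using card_x fin_Cx by (simp add: card_Diff_subset finite_subset)
  then show "card (centralizer_class G x) \<le> card (center G)"
    using card_mono[OF _ centralizer_class_subset[OF x]] fin_Cx by (metis finite_Diff)
  show "card (center G) \<le> card (centralizer_class G x)"
    using card_mono[OF finite_centralizer_class[OF fin] rcos_center_subset_centralizer_class]
      card_rcos center_subset_carrier x
    by (metis DiffD1)
qed

lemma card_center_less_card_centralizer_class:
  assumes fin: "finite (carrier G)" and ord: "order G = 8 * card (center G)"
    and x: "x \<in> carrier G - center G"
    and card_x: "card (centralizer G x) = 4 * card (center G)"
  shows "card (center G) < card (centralizer_class G x)"
proof -
  have "center G \<union> (center G #> x) \<noteq> centralizer G x"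
    using card_center_Un_rcos[OF fin x] card_x card_center_pos[OF fin] by auto
  then obtain y where y: "y \<in> centralizer G x - (center G \<union> (center G #> x))"
    using center_Un_rcos_subset_centralizer x by blast
  have yG: "y \<in> carrier G - center G"
    using y x subgroup.subset[OF subgroup_centralizer] by blast
  note fin_C = finite_centralizer[OF fin]
  have sub: "centralizer G x \<subseteq> centralizer G y"
    by (rule centralizer_subset_centralizer[OF fin x card_x y])
  moreover have "card (centralizer G y) \<le> card (centralizer G x)"
    using card_centralizer_cases[OF fin ord yG] card_x by auto
  ultimately have "card (centralizer G x) = card (centralizer G y)"
    using card_mono[OF fin_C sub] by simp
  then have "centralizer G y = centralizer G x"
    using card_subset_eq[OF fin_C sub] by simp
  then have "insert y (center G #> x) \<subseteq> centralizer_class G x"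
    using yG x rcos_center_subset_centralizer_class by (auto simp: centralizer_class_def)
  moreover have "card (insert y (center G #> x)) = card (center G) + 1"
    using y x fin center_subset_carrier card_rcos finite_rcos_center by simp
  ultimately show ?thesis
    using card_mono[OF finite_centralizer_class[OF fin]] by (metis Suc_eq_plus1 Suc_le_eq)
qed

theorem noncent_regular_iff_index_centralizer_eq_4:
  assumes fin: "finite (carrier G)" and ord: "order G = 8 * card (center G)"
  shows "noncent_regular G \<longleftrightarrow>
    (\<forall>x \<in> carrier G - center G. group_index G (centralizer G x) = 4)"
proof -
  have "card (centralizer_class G x) = card (center G) \<longleftrightarrow>
      group_index G (centralizer G x) = 4" if x: "x \<in> carrier G - center G" for x
  proof -
    have "group_index G (centralizer G x) * card (centralizer G x) = 8 * card (center G)"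
      using lagrange[OF subgroup_centralizer] x ord by (simp add: group_index_def)
    then consider
        "card (centralizer G x) = 2 * card (center G)" "group_index G (centralizer G x) = 4"
      | "card (centralizer G x) = 4 * card (center G)" "group_index G (centralizer G x) = 2"
      using card_centralizer_cases[OF fin ord x] card_center_pos[OF fin] by auto
    then show ?thesis
      by cases (use card_centralizer_class_eq_card_center[OF fin x]
          card_center_less_card_centralizer_class[OF fin ord x] in auto)
  qed
  moreover have "card (centralizer_class G z) = card (center G)" if "z \<in> center G" for z
    using that centralizer_class_center by simp
  ultimately show ?thesis
    unfolding noncent_regular_iff_card_centralizer_class[OF fin] by (metis DiffD1 DiffD2 DiffI)
qed

end

lemma card_rcosets_eq_order_if_iso:
  "G Mod H \<cong> K \<Longrightarrow> card (rcosets\<^bsub>G\<^esub> H) = order K"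
  by (auto simp: is_iso_def iso_def FactGroup_def order_def dest: bij_betw_same_card)

theorem theorem2p9:
  fixes G :: "('a, 'b) monoid_scheme"
  assumes "group G"
    and "finite (carrier G)"
    and "\<not> comm_group G"
    and "G Mod (center G) \<cong>
           (integer_mod_group 2 \<times>\<times> integer_mod_group 2 \<times>\<times> integer_mod_group 2)"
  shows "noncent_regular G \<longleftrightarrow>
           (\<forall>x \<in> carrier G - center G. group_index G (centralizer G x) = 4)"
proof -
  interpret group G by (rule assms(1))
  have "card (rcosets\<^bsub>G\<^esub> (center G)) = 8"
    using card_rcosets_eq_order_if_iso[OF assms(4)]
    by (simp add: order_def carrier_integer_mod_group card_cartesian_product)
  then have "order G = 8 * card (center G)"
    using lagrange[OF subgroup_center] by simp
  then show ?thesis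
    using noncent_regular_iff_index_centralizer_eq_4 assms(2) by blast
qed

end
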